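(* Let $n,t,m,t'$ be positive integers with $n>m$, $t'\ge \frac{t\log(n-m)}{\log n}$ and $m\ge t'+2$. Then there exist a map $\mathcal{E}:\mathcal{S}_n\to\mathcal{S}_{n+t'}$ and a decoding map $\mathcal{D}$ such that for every $\sigma\in\mathcal{S}_n$ and every sequence $\pi_e$ obtained from $\pi=\mathcal{E}(\sigma)$ by at most $t$ stuck-at errors with threshold $m$ (as defined in the context), we have $\mathcal{D}(\pi_e)=\sigma$.
   Context: $\mathcal{S}_N$ denotes the set of permutations $\pi=(\pi(1),\ldots,\pi(N))$ of $[N]=\{1,\ldots,N\}$. Stuck-at errors with threshold $m$: a sequence $\pi_e\in[N]^N$ is obtained from $\pi\in\mathcal{S}_N$ by at most $t$ stuck-at errors if there is a set $I\subseteq[N]$ with $|I|\le t$ and $\pi(i)>m$ for all $i\in I$, such that $\pi_e(i)=\pi(i)-1$ for $i\in I$ and $\pi_e(i)=\pi(i)$ for $i\in[N]\setminus I$. Logarithms are to a common base (e.g. base 2). *)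

theory Defs
  imports Complex_Main
begin

text \<open>Permutations of [N] = {1..N}, represented as lists pi = [pi(1),...,pi(N)]
  (list index i corresponds to position i+1).\<close>
definition perms :: "nat \<Rightarrow> nat list set" where
  "perms N = {p. length p = N \<and> distinct p \<and> set p = {1..N}}"

definition stuck_at :: "nat \<Rightarrow> nat \<Rightarrow> nat list \<Rightarrow> nat list \<Rightarrow> bool" where
  "stuck_at m t p pe \<longleftrightarrow> length pe = length p \<and>
     (\<exists>I. I \<subseteq> {0..<length p} \<and> card I \<le> t \<and> (\<forall>i\<in>I. p ! i > m) \<and>
          (\<forall>i<length p. pe ! i = (if i \<in> I then p ! i - 1 else p ! i)))"

end

theory Submission
  imports Defs "HOL-Combinatorics.Multiset_Permutations"
begin

text \<open>A Gilbert-Varshamov argument. If two permutations can be turned into the same word by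
  stuck-at errors, they differ by at most one in every entry; then \<open>q\<close> arises from \<open>p\<close> by
  swapping the values \<open>u\<close> and \<open>u + 1\<close> for every \<open>u\<close> in the set of values that \<open>q\<close> raises, and
  this set consists of at most \<open>t\<close> pairwise non-consecutive values in \<open>[m, N)\<close>. Hence every
  permutation of length \<open>N = n + t'\<close> is confusable with at most
  \<open>\<Sum>k\<le>t. (N - m + 1 - k) choose k\<close> others, and under the hypotheses this is at most
  \<open>(n + 1) ^ t'\<close>. A greedy choice yields \<open>(n + t')! / (n + 1) ^ t' \<ge> n!\<close> pairwise
  non-confusable permutations; any injection of the permutations of length \<open>n\<close> into them is a
  code, decoded by taking the unique codeword compatible with the received word.\<close>

definition binomial_sum :: "nat \<Rightarrow> nat \<Rightarrow> nat" where
  "binomial_sum r x = (\<Sum>k\<le>r. x choose k)"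

lemma binomial_sum_le_Suc_power: "binomial_sum r x \<le> (x + 1) ^ r"
proof -
  have "binomial_sum r x \<le> (\<Sum>k\<le>r. (r choose k) * x ^ k * 1 ^ (r - k))"
    unfolding binomial_sum_def
  proof (rule sum_mono)
    fix k assume "k \<in> {..r}"
    then have "1 \<le> r choose k"
      using zero_less_binomial_iff[of r k] by (simp add: Suc_le_eq)
    moreover have "x choose k \<le> x ^ k"
      by (cases "k \<le> x") (simp_all add: binomial_le_pow binomial_eq_0)
    ultimately show "x choose k \<le> (r choose k) * x ^ k * 1 ^ (r - k)"
      using le_trans mult_le_mono1 by fastforce
  qed
  also have "\<dots> = (x + 1) ^ r"
    using binomial[of x 1 r] by simp
  finally show ?thesis .
qed

lemma binomial_sum_Suc_Suc:
  "binomial_sum (Suc r) (Suc x) = binomial_sum (Suc r) x + binomial_sum r x"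
  by (induction r) (simp_all add: binomial_sum_def)

lemma binomial_sum_add_le:
  "binomial_sum (Suc r) (a + j) \<le> binomial_sum (Suc r) a + j * (a + j) ^ r"
proof (induction j)
  case 0
  then show ?case by simp
next
  case (Suc j)
  have "binomial_sum (Suc r) (a + Suc j) = binomial_sum (Suc r) (a + j) + binomial_sum r (a + j)"
    using binomial_sum_Suc_Suc[of r "a + j"] by simp
  also have "\<dots> \<le> binomial_sum (Suc r) a + j * (a + j) ^ r + (a + Suc j) ^ r"
    using Suc.IH binomial_sum_le_Suc_power[of r "a + j"] by simp
  also have "\<dots> \<le> binomial_sum (Suc r) a + Suc j * (a + Suc j) ^ r"
    using power_mono[of "a + j" "a + Suc j" r] by simp
  finally show ?case .
qed

lemma binomial_sum_le_power:
  assumes "2 \<le> a" "2 \<le> r"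
  shows "binomial_sum r a \<le> a ^ r"
  using assms(2)
proof (induction r rule: dec_induct)
  case base
  obtain c where c: "a = Suc c" "1 \<le> c"
    using assms(1) by (cases a) auto
  have "2 * binomial_sum 2 a = 2 + 2 * a + a * c"
    using Suc_times_binomial[of 1 c] c(1) by (simp add: binomial_sum_def numeral_2_eq_2)
  also have "\<dots> \<le> 2 * a ^ 2"
    using c by (simp add: power2_eq_square algebra_simps) (use le_square[of c] in linarith)
  finally show ?case by simp
next
  case (step r)
  have "2 * (a choose Suc r) \<le> (a choose Suc r) * fact (Suc r)"
    using step.hyps fact_ge_self[of "Suc r"] by simp
  also have "\<dots> \<le> a ^ Suc r"
    by (rule binomial_fact_pow)
  finally have "2 * (a choose Suc r) \<le> a ^ Suc r" .
  moreover have "2 * a ^ r \<le> a ^ Suc r"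
    using assms(1) by simp
  moreover have "binomial_sum (Suc r) a = binomial_sum r a + (a choose Suc r)"
    by (simp add: binomial_sum_def)
  ultimately show ?case
    using step.IH by linarith
qed

lemma power_Suc_add_le_Suc_power: "n ^ Suc r + Suc r * n ^ r \<le> (n + 1 :: nat) ^ Suc r"
proof (induction r)
  case 0
  then show ?case by simp
next
  case (Suc r)
  have "n ^ Suc (Suc r) + Suc (Suc r) * n ^ Suc r \<le> (n + 1) * (n ^ Suc r + Suc r * n ^ r)"
    by (simp add: algebra_simps)
  also have "\<dots> \<le> (n + 1) * (n + 1) ^ Suc r"
    using Suc.IH by (rule mult_le_mono2)
  also have "\<dots> = (n + 1) ^ Suc (Suc r)"
    by simp
  finally show ?case .
qed

lemma fact_mult_Suc_power_le: "fact n * (n + 1) ^ r \<le> (fact (n + r) :: nat)"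
proof (induction r)
  case 0
  then show ?case by simp
next
  case (Suc r)
  have "fact n * (n + 1) ^ Suc r = (n + 1) * (fact n * (n + 1) ^ r)"
    by (simp add: algebra_simps)
  also have "\<dots> \<le> (n + Suc r) * fact (n + r)"
    using Suc.IH by (intro mult_le_mono) simp_all
  finally show ?case by simp
qed

lemma binomial_sum_Suc_one: "binomial_sum (Suc r) 1 = 2"
  by (induction r) (simp_all add: binomial_sum_def)

lemma binomial_sum_le_max_power:
  assumes "1 \<le> a" "2 \<le> r"
  shows "binomial_sum r a \<le> max 2 (a ^ r)"
proof (cases "a = 1")
  case True
  then show ?thesis
    using assms(2) binomial_sum_Suc_one[of "r - 1"] by simp
next
  case False
  then show ?thesis
    using assms binomial_sum_le_power[of a r] by simp
qed

lemma choose_diff_le_choose: "(L + 1 - k) choose k \<le> L choose k"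
  by (cases k) (simp_all add: binomial_right_mono)

lemma sum_choose_diff_le_Suc_power:
  fixes a t t' n :: nat
  assumes a: "1 \<le> a" and t': "1 \<le> t'" and n: "a + t' \<le> n" and pow: "a ^ t \<le> n ^ t'"
  shows "(\<Sum>k\<le>t. (a + t' + 1 - k) choose k) \<le> (n + 1) ^ t'"
proof (cases "t \<le> t'")
  case True
  have "(\<Sum>k\<le>t. (a + t' + 1 - k) choose k) \<le> binomial_sum t (a + t')"
    unfolding binomial_sum_def by (intro sum_mono choose_diff_le_choose)
  also have "\<dots> \<le> (a + t' + 1) ^ t"
    by (rule binomial_sum_le_Suc_power)
  also have "\<dots> \<le> (n + 1) ^ t'"
    using n True by (intro order.trans[OF power_mono power_increasing]) auto
  finally show ?thesis .
next
  case False
  \<comment> \<open>the terms with \<open>k > t'\<close> complete the first \<open>t' + 1\<close> terms of row \<open>a\<close> to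
    \<open>binomial_sum t a \<le> n ^ t'\<close>; moving the first terms from row \<open>a\<close> to row \<open>a + t'\<close>
    costs at most \<open>t' * n ^ (t' - 1)\<close>\<close>
  obtain r where r: "t' = Suc r"
    using t' by (cases t') auto
  have split: "{..t} = {..t'} \<union> {t'<..t}"
    using False by auto
  have tail: "binomial_sum t a = binomial_sum t' a + (\<Sum>k\<in>{t'<..t}. a choose k)"
    unfolding binomial_sum_def split by (rule sum.union_disjoint) auto
  have "binomial_sum t a \<le> max 2 (a ^ t)"
    using a False r by (intro binomial_sum_le_max_power) auto
  also have "\<dots> \<le> n ^ t'"
    using a t' n pow power_increasing[of 1 t' n] by simp
  finally have "binomial_sum t a \<le> n ^ t'" .
  have "(\<Sum>k\<le>t. (a + t' + 1 - k) choose k)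
        = (\<Sum>k\<le>t'. (a + t' + 1 - k) choose k) + (\<Sum>k\<in>{t'<..t}. (a + t' + 1 - k) choose k)"
    unfolding split by (rule sum.union_disjoint) auto
  also have "\<dots> \<le> binomial_sum t' (a + t') + (\<Sum>k\<in>{t'<..t}. a choose k)"
    unfolding binomial_sum_def
    by (intro add_mono sum_mono choose_diff_le_choose binomial_right_mono) auto
  also have "\<dots> \<le> binomial_sum t a + t' * (a + t') ^ r"
    using binomial_sum_add_le[of r a t'] tail r by simp
  also have "\<dots> \<le> n ^ t' + t' * n ^ r"
    using \<open>binomial_sum t a \<le> n ^ t'\<close> n by (intro add_mono mult_le_mono2 power_mono) auto
  also have "\<dots> \<le> (n + 1) ^ t'"
    using power_Suc_add_le_Suc_power[of n r] r by simp
  finally show ?thesis .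
qed

lemma power_le_power_if_ln_ratio_le:
  fixes a n s t :: nat
  assumes "0 < a" "1 < n" and "real t * ln (real a) / ln (real n) \<le> real s"
  shows "a ^ t \<le> n ^ s"
proof -
  have "real t * ln (real a) \<le> real s * ln (real n)"
    using assms by (simp add: pos_divide_le_eq)
  then have "ln (real a ^ t) \<le> ln (real n ^ s)"
    using assms(1,2) by (simp add: ln_realpow)
  then have "real a ^ t \<le> real n ^ s"
    using assms(1,2) by simp
  then show ?thesis
    by (metis of_nat_le_iff of_nat_power)
qed

definition no_consecutive :: "nat set \<Rightarrow> bool" where
  "no_consecutive U \<longleftrightarrow> (\<forall>u\<in>U. Suc u \<notin> U)"

definition sparse_subsets :: "nat \<Rightarrow> nat \<Rightarrow> nat \<Rightarrow> nat set set" where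
  "sparse_subsets b L k = {U. U \<subseteq> {b..<b + L} \<and> card U = k \<and> no_consecutive U}"

lemma finite_sparse_subsets: "finite (sparse_subsets b L k)"
  unfolding sparse_subsets_def by (rule finite_subset[of _ "Pow {b..<b + L}"]) auto

lemma card_sparse_subsets_le_choose: "card (sparse_subsets b L k) \<le> L choose k"
proof -
  have "card (sparse_subsets b L k) \<le> card {U. U \<subseteq> {b..<b + L} \<and> card U = k}"
    unfolding sparse_subsets_def by (intro card_mono) auto
  also have "\<dots> = L choose k"
    by (simp add: n_subsets)
  finally show ?thesis .
qed

lemma sparse_subsets_Suc_Suc:
  "sparse_subsets b (Suc (Suc L)) (Suc k)
     \<subseteq> sparse_subsets b (Suc L) (Suc k) \<union> insert (b + Suc L) ` sparse_subsets b L k"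
proof
  fix U assume U: "U \<in> sparse_subsets b (Suc (Suc L)) (Suc k)"
  then have sub: "U \<subseteq> {b..<b + Suc (Suc L)}" and fin: "finite U"
    unfolding sparse_subsets_def by (auto intro: finite_subset)
  show "U \<in> sparse_subsets b (Suc L) (Suc k) \<union> insert (b + Suc L) ` sparse_subsets b L k"
  proof (cases "b + Suc L \<in> U")
    case False
    then have "U \<subseteq> {b..<b + Suc L}"
      using sub by (auto simp: less_Suc_eq)
    then show ?thesis
      using U unfolding sparse_subsets_def by auto
  next
    case True
    then have "b + L \<notin> U"
      using U unfolding sparse_subsets_def no_consecutive_def by auto
    then have "U - {b + Suc L} \<in> sparse_subsets b L k"
      using U sub fin True unfolding sparse_subsets_def no_consecutive_def
      by (auto simp: less_Suc_eq)
    moreover have "U = insert (b + Suc L) (U - {b + Suc L})"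
      using True by auto
    ultimately show ?thesis
      by blast
  qed
qed

lemma card_sparse_subsets_le: "card (sparse_subsets b L k) \<le> (L + 1 - k) choose k"
proof (induction L arbitrary: k rule: induct_nat_012)
  case 0
  then show ?case
    using card_sparse_subsets_le_choose[of b 0 k] by (cases k) auto
next
  case 1
  then show ?case
    using card_sparse_subsets_le_choose[of b 1 k] by (cases "k \<le> 1") (auto simp: le_Suc_eq binomial_eq_0)
next
  case (ge2 L)
  show ?case
  proof (cases k)
    case 0
    then show ?thesis
      using card_sparse_subsets_le_choose[of b "Suc (Suc L)" k] by simp
  next
    case (Suc k')
    have "card (sparse_subsets b (Suc (Suc L)) k)
          \<le> card (sparse_subsets b (Suc L) k) + card (insert (b + Suc L) ` sparse_subsets b L k')"
      unfolding Suc using sparse_subsets_Suc_Suc finite_sparse_subsets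
      by (intro order.trans[OF card_mono card_Un_le]) auto
    also have "\<dots> \<le> card (sparse_subsets b (Suc L) k) + card (sparse_subsets b L k')"
      using card_image_le[OF finite_sparse_subsets] by simp
    also have "\<dots> \<le> ((L + 2 - k) choose k) + ((L + 1 - k') choose k')"
      using ge2.IH by (intro add_mono) simp_all
    also have "\<dots> = (Suc (Suc L) + 1 - k) choose k"
      unfolding Suc by (cases "k' \<le> L") (simp_all add: Suc_diff_le binomial_eq_0)
    finally show ?thesis .
  qed
qed

lemma greedy_independent_set:
  assumes "finite V" "\<And>x. x \<in> V \<Longrightarrow> R x x" "\<And>x y. R x y \<Longrightarrow> R y x"
    and "\<And>x. x \<in> V \<Longrightarrow> card {y \<in> V. R x y} \<le> K"
  shows "\<exists>S\<subseteq>V. (\<forall>x\<in>S. \<forall>y\<in>S. R x y \<longrightarrow> x = y) \<and> card V \<le> K * card S"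
  using assms
proof (induction V rule: finite_psubset_induct)
  case (psubset V)
  show ?case
  proof (cases "V = {}")
    case True
    then show ?thesis by auto
  next
    case False
    then obtain x where x: "x \<in> V" by auto
    define V' where "V' = V - {y \<in> V. R x y}"
    have "V' \<subset> V"
      using x psubset.prems(1)[OF x] unfolding V'_def by auto
    moreover have "card {y \<in> V'. R z y} \<le> K" if "z \<in> V'" for z
    proof -
      have "card {y \<in> V'. R z y} \<le> card {y \<in> V. R z y}"
        using psubset.hyps(1) unfolding V'_def by (intro card_mono) auto
      then show ?thesis
        using psubset.prems(3)[of z] that unfolding V'_def by auto
    qed
    ultimately obtain S' where S': "S' \<subseteq> V'" "\<forall>x\<in>S'. \<forall>y\<in>S'. R x y \<longrightarrow> x = y"
        "card V' \<le> K * card S'"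
      using psubset.IH[of V'] psubset.prems unfolding V'_def by auto
    have "x \<notin> S'" and "finite S'"
      using S'(1) psubset.prems(1)[OF x] psubset.hyps(1) unfolding V'_def
      by (auto intro: finite_subset)
    have "card {y \<in> V. R x y} \<le> card V"
      using psubset.hyps(1) by (intro card_mono) auto
    then have "card V = card V' + card {y \<in> V. R x y}"
      unfolding V'_def using psubset.hyps(1) by (subst card_Diff_subset) auto
    also have "\<dots> \<le> K * card (insert x S')"
      using S'(3) psubset.prems(3)[OF x] \<open>x \<notin> S'\<close> \<open>finite S'\<close> by simp
    finally have "card V \<le> K * card (insert x S')" .
    moreover have "insert x S' \<subseteq> V"
      using S'(1) x unfolding V'_def by auto
    moreover have "\<forall>u\<in>insert x S'. \<forall>v\<in>insert x S'. R u v \<longrightarrow> u = v"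
      using S' psubset.prems(2) unfolding V'_def by blast
    ultimately show ?thesis
      by blast
  qed
qed

lemma exists_encoder_decoder:
  fixes ch :: "'b \<Rightarrow> 'c \<Rightarrow> bool" and A :: "'a set"
  assumes "finite A" "finite C" "card A \<le> card C"
    and separated: "\<forall>x\<in>C. \<forall>y\<in>C. (\<exists>z. ch x z \<and> ch y z) \<longrightarrow> x = y"
  shows "\<exists>E D. (\<forall>a\<in>A. E a \<in> C) \<and> (\<forall>a\<in>A. \<forall>z. ch (E a) z \<longrightarrow> D z = a)"
proof -
  obtain E where E: "E ` A \<subseteq> C" "inj_on E A"
    using card_le_inj[OF assms(1-3)] by blast
  define D where "D z = (SOME a. a \<in> A \<and> ch (E a) z)" for z
  have "D z = a" if a: "a \<in> A" and z: "ch (E a) z" for a z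
  proof -
    have "D z \<in> A \<and> ch (E (D z)) z"
      unfolding D_def using a z by (rule someI[of "\<lambda>a. a \<in> A \<and> ch (E a) z", OF conjI])
    then have "E (D z) = E a"
      using separated E(1) a z by blast
    then show ?thesis
      using E(2) a \<open>D z \<in> A \<and> ch (E (D z)) z\<close> by (meson inj_onD)
  qed
  then show ?thesis
    using E(1) by blast
qed

lemma perms_eq_permutations_of_set: "perms N = permutations_of_set {1..N}"
  unfolding perms_def permutations_of_set_def by (auto dest: distinct_card)

lemma card_perms: "card (perms N) = fact N"
  by (simp add: perms_eq_permutations_of_set)

lemma finite_perms: "finite (perms N)"
  by (simp add: perms_eq_permutations_of_set)

definition stuck_at_confusable :: "nat \<Rightarrow> nat \<Rightarrow> nat list \<Rightarrow> nat list \<Rightarrow> bool" where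
  "stuck_at_confusable m t p q \<longleftrightarrow> (\<exists>pe. stuck_at m t p pe \<and> stuck_at m t q pe)"

definition entrywise_adjacent :: "nat list \<Rightarrow> nat list \<Rightarrow> bool" where
  "entrywise_adjacent p q \<longleftrightarrow>
     length q = length p \<and> (\<forall>i<length p. q ! i \<le> Suc (p ! i) \<and> p ! i \<le> Suc (q ! i))"

lemma stuck_at_refl: "stuck_at m t p p"
  unfolding stuck_at_def by (intro conjI exI[of _ "{}"]) simp_all

lemma stuck_at_confusable_refl: "stuck_at_confusable m t p p"
  unfolding stuck_at_confusable_def using stuck_at_refl by blast

lemma stuck_at_confusable_sym: "stuck_at_confusable m t p q \<Longrightarrow> stuck_at_confusable m t q p"
  unfolding stuck_at_confusable_def by blast

lemma entrywise_adjacent_if_stuck_at_confusable: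
  assumes "stuck_at_confusable m t p q"
  shows "entrywise_adjacent p q"
proof -
  obtain pe where "stuck_at m t p pe" "stuck_at m t q pe"
    using assms unfolding stuck_at_confusable_def by blast
  then obtain I J where
      "length q = length p"
      "\<forall>i<length p. pe ! i = (if i \<in> I then p ! i - 1 else p ! i)"
      "\<forall>i<length q. pe ! i = (if i \<in> J then q ! i - 1 else q ! i)"
    unfolding stuck_at_def by metis
  moreover have "q ! i \<le> Suc (p ! i) \<and> p ! i \<le> Suc (q ! i)" if "i < length p" for i
    using calculation that by (cases "i \<in> I"; cases "i \<in> J") fastforce+
  ultimately show ?thesis
    unfolding entrywise_adjacent_def by blast
qed

lemma card_indices_eq_card_values:
  assumes "distinct p"
  shows "card {j. j < length p \<and> P (p ! j)} = card {v \<in> set p. P v}"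
proof -
  have "{v \<in> set p. P v} = nth p ` {j. j < length p \<and> P (p ! j)}"
    by (auto simp: in_set_conv_nth)
  moreover have "inj_on (nth p) {j. j < length p \<and> P (p ! j)}"
    using assms by (intro inj_on_nth) auto
  ultimately show ?thesis
    by (simp add: card_image)
qed

text \<open>Both permutations have the same number of entries \<open>\<le> x\<close>, so a position where the entry
  crosses the threshold \<open>x\<close> upwards must be balanced by one where it crosses downwards.\<close>

lemma entrywise_adjacent_perms_raise_iff_lower:
  assumes p: "p \<in> perms N" and q: "q \<in> perms N" and adj: "entrywise_adjacent p q"
  shows "(\<exists>j<N. p ! j = x \<and> q ! j = Suc x) \<longleftrightarrow> (\<exists>j<N. p ! j = Suc x \<and> q ! j = x)"
proof -
  have lp: "length p = N" "distinct p" "set p = {1..N}" and lq: "length q = N" "distinct q" "set q = {1..N}"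
    using p q unfolding perms_def by auto
  define A where "A = {j. j < N \<and> p ! j \<le> x}"
  define B where "B = {j. j < N \<and> q ! j \<le> x}"
  have "card A = card B"
    using card_indices_eq_card_values[OF lp(2), of "\<lambda>v. v \<le> x"]
      card_indices_eq_card_values[OF lq(2), of "\<lambda>v. v \<le> x"]
    unfolding A_def B_def lp(1,3) lq(1,3) by simp
  moreover have "finite A" "finite B"
    unfolding A_def B_def by auto
  ultimately have "card (A - B) = card (B - A)"
    by (metis card_Diff_subset_Int Int_commute finite_Int)
  then have "A - B = {} \<longleftrightarrow> B - A = {}"
    using \<open>finite A\<close> \<open>finite B\<close> by (metis card_0_eq finite_Diff)
  moreover have "A - B = {j. j < N \<and> p ! j = x \<and> q ! j = Suc x}"
    and "B - A = {j. j < N \<and> p ! j = Suc x \<and> q ! j = x}"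
    using adj lp(1) unfolding A_def B_def entrywise_adjacent_def by (auto; fastforce)+
  ultimately show ?thesis
    by blast
qed

definition raised :: "nat list \<Rightarrow> nat list \<Rightarrow> nat set" where
  "raised p q = {p ! j | j. j < length p \<and> q ! j = Suc (p ! j)}"

definition adjacent_swaps :: "nat set \<Rightarrow> nat \<Rightarrow> nat" where
  "adjacent_swaps U v = (if v \<in> U then Suc v else if v \<in> Suc ` U then v - 1 else v)"

lemma nth_eq_adjacent_swaps_raised:
  assumes p: "p \<in> perms N" and q: "q \<in> perms N" and adj: "entrywise_adjacent p q"
    and i: "i < N"
  shows "q ! i = adjacent_swaps (raised p q) (p ! i)"
proof -
  have lp: "length p = N" "distinct p"
    using p unfolding perms_def by auto
  have at_i: "j = i" if "j < N" "p ! j = p ! i" for j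
    using lp i that by (metis nth_eq_iff_index_eq)
  note raise_iff_lower = entrywise_adjacent_perms_raise_iff_lower[OF p q adj]
  consider (up) "p ! i \<in> raised p q"
    | (down) "p ! i \<notin> raised p q" "p ! i \<in> Suc ` raised p q"
    | (fixed) "p ! i \<notin> raised p q" "p ! i \<notin> Suc ` raised p q"
    by blast
  then show ?thesis
  proof cases
    case up
    then obtain j where "j < N" "p ! j = p ! i" "q ! j = Suc (p ! i)"
      unfolding raised_def lp(1) by auto
    with up show ?thesis
      using at_i unfolding adjacent_swaps_def by auto
  next
    case down
    then obtain v j where v: "p ! i = Suc v" "j < N" "p ! j = v" "q ! j = Suc v"
      unfolding raised_def lp(1) by auto
    then obtain j' where "j' < N" "p ! j' = Suc v" "q ! j' = v"
      using raise_iff_lower[of v] by blast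
    with v down show ?thesis
      using at_i unfolding adjacent_swaps_def by auto
  next
    case fixed
    have "q ! i \<noteq> Suc (p ! i)"
      using fixed(1) i lp(1) unfolding raised_def by auto
    moreover have "p ! i \<noteq> Suc (q ! i)"
    proof
      assume "p ! i = Suc (q ! i)"
      then obtain j where "j < N" "p ! j = q ! i" "q ! j = Suc (q ! i)"
        using raise_iff_lower[of "q ! i"] i by blast
      then have "q ! i \<in> raised p q"
        unfolding raised_def lp(1) by force
      with fixed(2) \<open>p ! i = Suc (q ! i)\<close> show False
        by blast
    qed
    ultimately have "q ! i = p ! i"
      using adj i lp(1) unfolding entrywise_adjacent_def by fastforce
    with fixed show ?thesis
      unfolding adjacent_swaps_def by simp
  qed
qed

lemma inj_on_raised:
  assumes "p \<in> perms N"
  shows "inj_on (raised p) {q \<in> perms N. entrywise_adjacent p q}"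
proof (rule inj_onI)
  fix q q' assume q: "q \<in> {q \<in> perms N. entrywise_adjacent p q}"
    and q': "q' \<in> {q \<in> perms N. entrywise_adjacent p q}" and eq: "raised p q = raised p q'"
  show "q = q'"
  proof (rule nth_equalityI)
    show "length q = length q'"
      using q q' unfolding perms_def by simp
    fix i assume "i < length q"
    then have "i < N"
      using q unfolding perms_def by simp
    then show "q ! i = q' ! i"
      using nth_eq_adjacent_swaps_raised[OF assms, of q i] nth_eq_adjacent_swaps_raised[OF assms, of q' i]
        q q' eq by simp
  qed
qed

lemma no_consecutive_raised:
  assumes p: "p \<in> perms N" and q: "q \<in> perms N" and adj: "entrywise_adjacent p q"
  shows "no_consecutive (raised p q)"
  unfolding no_consecutive_def
proof
  have lp: "length p = N" "distinct p"
    using p unfolding perms_def by auto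
  fix v assume "v \<in> raised p q"
  then obtain j where "j < N" "p ! j = v" "q ! j = Suc v"
    unfolding raised_def lp(1) by auto
  then obtain j' where j': "j' < N" "p ! j' = Suc v" "q ! j' = v"
    using entrywise_adjacent_perms_raise_iff_lower[OF p q adj, of v] by blast
  show "Suc v \<notin> raised p q"
  proof
    assume "Suc v \<in> raised p q"
    then obtain j'' where "j'' < N" "p ! j'' = Suc v" "q ! j'' = Suc (Suc v)"
      unfolding raised_def lp(1) by auto
    moreover from this j' lp have "j'' = j'"
      by (metis nth_eq_iff_index_eq)
    ultimately show False
      using j' by simp
  qed
qed

lemma raised_if_stuck_at_confusable:
  assumes p: "p \<in> perms N" and q: "q \<in> perms N" and conf: "stuck_at_confusable m t p q"
  shows "raised p q \<subseteq> {m..<N}" and "card (raised p q) \<le> t"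
proof -
  have lp: "length p = N" and lq: "length q = N" "set q = {1..N}"
    using p q unfolding perms_def by auto
  obtain pe where pe: "stuck_at m t p pe" "stuck_at m t q pe"
    using conf unfolding stuck_at_confusable_def by blast
  obtain I where I: "\<forall>i<N. pe ! i = (if i \<in> I then p ! i - 1 else p ! i)"
    using pe(1) lp unfolding stuck_at_def by blast
  obtain J where J: "J \<subseteq> {0..<N}" "card J \<le> t" "\<forall>j\<in>J. m < q ! j"
      "\<forall>j<N. pe ! j = (if j \<in> J then q ! j - 1 else q ! j)"
    using pe(2) lq(1) unfolding stuck_at_def by blast
  \<comment> \<open>a raised entry of \<open>q\<close> exceeds \<open>pe\<close>, which never exceeds \<open>p\<close>, so it is stuck\<close>
  have stuck: "j \<in> J" if "j < N" "q ! j = Suc (p ! j)" for j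
  proof (rule ccontr)
    assume "j \<notin> J"
    then have "pe ! j = q ! j"
      using J(4) that(1) by simp
    moreover have "pe ! j \<le> p ! j"
      using I that(1) by simp
    ultimately show False
      using that(2) by simp
  qed
  have "q ! j \<le> N" if "j < N" for j
    using that lq nth_mem[of j q] by auto
  then show "raised p q \<subseteq> {m..<N}"
    using stuck J(3) unfolding raised_def lp by fastforce
  have "raised p q \<subseteq> nth p ` J"
    using stuck unfolding raised_def lp by auto
  moreover have "finite J"
    using J(1) finite_subset by blast
  ultimately show "card (raised p q) \<le> t"
    using J(2) by (meson card_image_le card_mono finite_imageI le_trans)
qed

lemma card_stuck_at_confusable_le:
  assumes p: "p \<in> perms N"
  shows "card {q \<in> perms N. stuck_at_confusable m t p q} \<le> (\<Sum>k\<le>t. (N - m + 1 - k) choose k)"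
proof -
  define Q where "Q = {q \<in> perms N. stuck_at_confusable m t p q}"
  have "raised p q \<in> (\<Union>k\<le>t. sparse_subsets m (N - m) k)" if "q \<in> Q" for q
  proof -
    have q: "q \<in> perms N" "stuck_at_confusable m t p q"
      using that unfolding Q_def by auto
    have "{m..<N} = {m..<m + (N - m)}"
      by auto
    then have "raised p q \<in> sparse_subsets m (N - m) (card (raised p q))"
      using raised_if_stuck_at_confusable(1)[OF p q] no_consecutive_raised[OF p q(1)]
        entrywise_adjacent_if_stuck_at_confusable[OF q(2)]
      unfolding sparse_subsets_def by simp
    then show ?thesis
      using raised_if_stuck_at_confusable(2)[OF p q] by blast
  qed
  moreover have "inj_on (raised p) Q"
    unfolding Q_def using entrywise_adjacent_if_stuck_at_confusable
    by (intro inj_on_subset[OF inj_on_raised[OF p]]) blast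
  ultimately have "card Q \<le> card (\<Union>k\<le>t. sparse_subsets m (N - m) k)"
    using finite_sparse_subsets by (intro card_inj_on_le) auto
  also have "\<dots> \<le> (\<Sum>k\<le>t. card (sparse_subsets m (N - m) k))"
    by (rule card_UN_le) simp
  also have "\<dots> \<le> (\<Sum>k\<le>t. (N - m + 1 - k) choose k)"
    by (intro sum_mono card_sparse_subsets_le)
  finally show ?thesis
    unfolding Q_def .
qed

lemma exists_stuck_at_code:
  "\<exists>C\<subseteq>perms N. (\<forall>p\<in>C. \<forall>q\<in>C. stuck_at_confusable m t p q \<longrightarrow> p = q) \<and>
     card (perms N) \<le> (\<Sum>k\<le>t. (N - m + 1 - k) choose k) * card C"
  using finite_perms stuck_at_confusable_refl stuck_at_confusable_sym card_stuck_at_confusable_le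
  by (rule greedy_independent_set)

theorem theorem1:
  fixes n t m t' :: nat
  assumes "n > 0" "t > 0" "m > 0" "t' > 0"
    and "n > m"
    and "real t' \<ge> real t * ln (real (n - m)) / ln (real n)"
    and "m \<ge> t' + 2"
  shows "\<exists>(E :: nat list \<Rightarrow> nat list) (D :: nat list \<Rightarrow> nat list).
           (\<forall>\<sigma>\<in>perms n. E \<sigma> \<in> perms (n + t')) \<and>
           (\<forall>\<sigma>\<in>perms n. \<forall>pe. stuck_at m t (E \<sigma>) pe \<longrightarrow> D pe = \<sigma>)"
proof -
  define a where "a = n - m"
  define K where "K = (\<Sum>k\<le>t. (a + t' + 1 - k) choose k)"
  have "a ^ t \<le> n ^ t'"
    unfolding a_def using assms(3,5) by (intro power_le_power_if_ln_ratio_le[OF _ _ assms(6)]) auto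
  then have "K \<le> (n + 1) ^ t'"
    unfolding K_def using assms(4,5,7) by (intro sum_choose_diff_le_Suc_power) (auto simp: a_def)
  then have "fact n * K \<le> fact n * (n + 1) ^ t'"
    by simp
  also have "\<dots> \<le> fact (n + t')"
    by (rule fact_mult_Suc_power_le)
  finally have "fact n * K \<le> fact (n + t')" .
  have "n + t' - m = a + t'"
    unfolding a_def using assms(5) by simp
  then obtain C where C: "C \<subseteq> perms (n + t')"
      "\<forall>p\<in>C. \<forall>q\<in>C. stuck_at_confusable m t p q \<longrightarrow> p = q" "fact (n + t') \<le> K * card C"
    using exists_stuck_at_code[of "n + t'" m t] unfolding K_def card_perms by auto
  have "fact n * K \<le> card C * K"
    using order.trans[OF \<open>fact n * K \<le> fact (n + t')\<close> C(3)] by (simp add: mult.commute)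
  moreover have "0 < K"
    unfolding K_def by (simp add: sum_pos2[of _ 0])
  ultimately have "card (perms n) \<le> card C"
    unfolding card_perms by simp
  moreover have "finite C"
    using C(1) finite_perms by (rule finite_subset)
  ultimately obtain E D where "\<forall>\<sigma>\<in>perms n. E \<sigma> \<in> C" "\<forall>\<sigma>\<in>perms n. \<forall>pe. stuck_at m t (E \<sigma>) pe \<longrightarrow> D pe = \<sigma>"
    using exists_encoder_decoder[of "perms n" C "stuck_at m t"] finite_perms C(2)
    unfolding stuck_at_confusable_def by blast
  with C(1) show ?thesis
    by blast
qed

end
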